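(* Let $\phi:[1]^m\to[1]^n$ be a surjective $\boxplus$-morphism and $\delta:[1]\to[1]^n$ an injective $\boxplus$-morphism. Then there exists a $\boxplus$-morphism $\delta^*:[1]\to[1]^m$ with $\phi\circ\delta^*=\delta$.
   Context: $[1]=\{0<1\}$, $[1]^n$ the product poset ($[1]^0=[0]$). An interval in a poset is a non-empty subset $[x,z]=\{y:x\leq y\leq z\}$. $\boxplus$ is the category whose objects are the $[1]^n$ ($n\geq0$) and whose morphisms are the monotone functions mapping every interval onto an interval. *)

theory Defs
  imports Main
begin

text \<open>The poset [1]^n: bool lists of length n (False < True), ordered componentwise.\<close>

definition cube :: "nat \<Rightarrow> bool list set" where
  "cube n = {xs. length xs = n}"

definition cube_le :: "bool list \<Rightarrow> bool list \<Rightarrow> bool" where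
  "cube_le xs ys \<longleftrightarrow> list_all2 (\<le>) xs ys"

definition cube_interval :: "nat \<Rightarrow> bool list \<Rightarrow> bool list \<Rightarrow> bool list set" where
  "cube_interval n x z = {y \<in> cube n. cube_le x y \<and> cube_le y z}"

definition is_interval :: "nat \<Rightarrow> bool list set \<Rightarrow> bool" where
  "is_interval n S \<longleftrightarrow> (\<exists>x\<in>cube n. \<exists>z\<in>cube n. cube_le x z \<and> S = cube_interval n x z)"

definition box_morphism :: "nat \<Rightarrow> nat \<Rightarrow> (bool list \<Rightarrow> bool list) \<Rightarrow> bool" where
  "box_morphism m n f \<longleftrightarrow>
     (\<forall>x\<in>cube m. f x \<in> cube n) \<and>
     (\<forall>x\<in>cube m. \<forall>y\<in>cube m. cube_le x y \<longrightarrow> cube_le (f x) (f y)) \<and>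
     (\<forall>S. is_interval m S \<longrightarrow> is_interval n (f ` S))"

end

theory Submission
  imports Defs
begin

text \<open>Let \<open>a < b\<close> be the endpoints of \<open>\<delta>\<close>; as \<open>{a, b}\<close> is an interval, \<open>b\<close> covers \<open>a\<close>.
  Lift \<open>a\<close> to some \<open>x\<close>. The up-set \<open>[x, 1\<dots>1]\<close> is mapped onto an interval containing \<open>a\<close>
  and \<open>\<phi>(1\<dots>1) \<ge> b\<close>, hence containing \<open>b\<close>, so \<open>b = \<phi> y\<close> for some \<open>y \<ge> x\<close>. Every point
  between \<open>x\<close> and \<open>y\<close> is sent to \<open>a\<close> or \<open>b\<close>, so switching off the coordinates in which \<open>y\<close>
  exceeds \<open>x\<close> one at a time must cross from \<open>b\<close> to \<open>a\<close> along an edge of \<open>[1]\<^sup>m\<close>,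
  and that edge is the required lift of \<open>\<delta>\<close>.\<close>

lemma cube_le_iff_nth:
  "cube_le xs ys \<longleftrightarrow> length xs = length ys \<and> (\<forall>i<length xs. xs!i \<le> ys!i)"
  unfolding cube_le_def by (simp add: list_all2_conv_all_nth)

lemma cube_le_refl: "cube_le x x"
  by (simp add: cube_le_iff_nth)

lemma cube_le_trans: "cube_le x y \<Longrightarrow> cube_le y z \<Longrightarrow> cube_le x z"
  by (simp add: cube_le_iff_nth)

lemma cube_le_antisym: "cube_le x y \<Longrightarrow> cube_le y x \<Longrightarrow> x = y"
  unfolding cube_le_iff_nth by (auto intro!: nth_equalityI)

lemma cube_le_replicate_True: "x \<in> cube m \<Longrightarrow> cube_le x (replicate m True)"
  by (simp add: cube_def cube_le_iff_nth)

lemma cube_one: "cube 1 = {[False], [True]}"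
  unfolding cube_def by (auto simp: length_Suc_conv)

lemma is_interval_cube_interval:
  "x \<in> cube n \<Longrightarrow> z \<in> cube n \<Longrightarrow> cube_le x z \<Longrightarrow> is_interval n (cube_interval n x z)"
  unfolding is_interval_def by blast

lemma is_interval_singleton: "x \<in> cube n \<Longrightarrow> is_interval n {x}"
  unfolding is_interval_def cube_interval_def
  by (rule bexI[of _ x], rule bexI[of _ x]) (auto simp: cube_le_refl dest: cube_le_antisym)

lemma is_interval_cube_one: "is_interval 1 (cube 1)"
proof -
  have "is_interval 1 (cube_interval 1 [False] [True])"
    by (rule is_interval_cube_interval) (simp_all add: cube_def cube_le_iff_nth)
  moreover have "cube_interval 1 [False] [True] = cube 1"
    unfolding cube_interval_def cube_one by (auto simp: cube_le_iff_nth)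
  ultimately show ?thesis
    by simp
qed

lemma is_interval_one_cases:
  assumes "is_interval 1 S"
  shows "S = {[False]} \<or> S = {[True]} \<or> S = {[False], [True]}"
proof -
  obtain x z where "x \<in> cube 1" "z \<in> cube 1" "cube_le x z" "S = cube_interval 1 x z"
    using assms unfolding is_interval_def by blast
  then show ?thesis
    unfolding cube_interval_def cube_one by (auto simp: cube_le_iff_nth)
qed

lemma is_interval_eq_cube_interval:
  assumes "is_interval n S" "a \<in> S" "b \<in> S" "\<forall>s\<in>S. cube_le a s \<and> cube_le s b"
  shows "S = cube_interval n a b"
proof -
  obtain u v where uv: "u \<in> cube n" "v \<in> cube n" "cube_le u v" "S = cube_interval n u v"
    using assms(1) unfolding is_interval_def by blast
  then have "u \<in> S" "v \<in> S"
    by (auto simp: cube_interval_def cube_le_refl)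
  with assms(2-4) uv(4) have "u = a" "v = b"
    by (auto simp: cube_interval_def intro: cube_le_antisym)
  with uv(4) show ?thesis by simp
qed

lemma cube_le_switch_off: "cube_le (y[j := False]) y"
  by (cases "j < length y") (auto simp: cube_le_iff_nth nth_list_update list_update_beyond)

lemma cube_le_switch_off_right: "cube_le x y \<Longrightarrow> \<not> x!j \<Longrightarrow> cube_le x (y[j := False])"
  by (cases "j < length y") (auto simp: cube_le_iff_nth nth_list_update list_update_beyond)

lemma cube_le_neq_ex_nth:
  assumes "cube_le x y" "x \<noteq> y"
  obtains j where "j < length y" "\<not> x!j" "y!j"
proof -
  have "\<exists>j<length y. \<not> x!j \<and> y!j"
  proof (rule ccontr)
    assume "\<not> ?thesis"
    with assms(1) have "x = y"
      by (auto simp: cube_le_iff_nth intro!: nth_equalityI)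
    with assms(2) show False ..
  qed
  with that show thesis by blast
qed

lemma cube_interval_switch_off:
  assumes "y \<in> cube m" "j < m" "y!j"
  shows "cube_interval m (y[j := False]) y = {y[j := False], y}"
proof (intro equalityI subsetI)
  fix z assume "z \<in> cube_interval m (y[j := False]) y"
  then have "length z = m" "\<forall>i<m. (y[j := False])!i \<le> z!i \<and> z!i \<le> y!i"
    using assms(1) by (auto simp: cube_interval_def cube_def cube_le_iff_nth)
  then have "z!i = y!i" if "i < m" "i \<noteq> j" for i
    using that by (metis (full_types) nth_list_update_neq order.antisym)
  with \<open>length z = m\<close> have "z = y[j := z!j]"
    using assms(1,2) by (intro nth_equalityI) (auto simp: cube_def nth_list_update)
  moreover have "y[j := True] = y"
    using assms(3) list_update_id[of y j] by simp
  ultimately show "z \<in> {y[j := False], y}"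
    by (cases "z!j") auto
next
  fix z assume "z \<in> {y[j := False], y}"
  then show "z \<in> cube_interval m (y[j := False]) y"
    using assms(1) cube_le_switch_off by (auto simp: cube_interval_def cube_def cube_le_refl)
qed

lemma count_list_switch_off:
  "j < length y \<Longrightarrow> y!j \<Longrightarrow> count_list (y[j := False]) True < count_list y True"
proof (induction y arbitrary: j)
  case (Cons b y)
  then show ?case by (cases j) auto
qed simp

lemma box_morphism_cube: "box_morphism m n f \<Longrightarrow> x \<in> cube m \<Longrightarrow> f x \<in> cube n"
  unfolding box_morphism_def by blast

lemma box_morphism_mono:
  "box_morphism m n f \<Longrightarrow> x \<in> cube m \<Longrightarrow> y \<in> cube m \<Longrightarrow> cube_le x y \<Longrightarrow> cube_le (f x) (f y)"
  unfolding box_morphism_def by blast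

lemma box_morphism_image_interval:
  "box_morphism m n f \<Longrightarrow> is_interval m S \<Longrightarrow> is_interval n (f ` S)"
  unfolding box_morphism_def by blast

lemma box_morphism_from_one:
  assumes "u \<in> cube m" "v \<in> cube m" "cube_le u v" "is_interval m {u, v}"
  shows "box_morphism 1 m (\<lambda>t. if t = [True] then v else u)"
  unfolding box_morphism_def
proof (intro conjI ballI allI impI)
  fix t assume "t \<in> cube 1"
  then show "(if t = [True] then v else u) \<in> cube m"
    using assms(1,2) by simp
next
  fix s t assume "s \<in> cube 1" "t \<in> cube 1" "cube_le s t"
  then show "cube_le (if s = [True] then v else u) (if t = [True] then v else u)"
    using assms(3) unfolding cube_one by (auto simp: cube_le_refl cube_le_iff_nth)
next
  fix S assume "is_interval 1 S"
  then have "S = {[False]} \<or> S = {[True]} \<or> S = {[False], [True]}"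
    by (rule is_interval_one_cases)
  then show "is_interval m ((\<lambda>t. if t = [True] then v else u) ` S)"
    using is_interval_singleton assms(1,2,4) by (elim disjE) simp_all
qed

lemma box_morphism_lift_above:
  assumes \<phi>: "box_morphism m n \<phi>" and x: "x \<in> cube m" and w: "w \<in> cube m"
    and le: "cube_le (\<phi> x) (\<phi> w)"
  shows "\<exists>y\<in>cube m. cube_le x y \<and> \<phi> y = \<phi> w"
proof -
  let ?top = "replicate m True"
  have top: "?top \<in> cube m" "cube_le x ?top" "cube_le w ?top"
    using x w by (simp_all add: cube_def cube_le_replicate_True)
  then have "is_interval m (cube_interval m x ?top)"
    using x by (simp add: is_interval_cube_interval)
  then obtain p q where pq: "\<phi> ` cube_interval m x ?top = cube_interval n p q"
    using box_morphism_image_interval[OF \<phi>] unfolding is_interval_def by blast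
  have "x \<in> cube_interval m x ?top" "?top \<in> cube_interval m x ?top"
    using x top by (auto simp: cube_interval_def cube_le_refl)
  then have "cube_le p (\<phi> x)" "cube_le (\<phi> ?top) q"
    using pq by (auto simp: cube_interval_def)
  moreover have "cube_le (\<phi> w) (\<phi> ?top)" "\<phi> w \<in> cube n"
    using box_morphism_mono[OF \<phi> w top(1,3)] box_morphism_cube[OF \<phi> w] by simp_all
  ultimately have "\<phi> w \<in> cube_interval n p q"
    using le cube_le_trans unfolding cube_interval_def by blast
  then have "\<phi> w \<in> \<phi> ` cube_interval m x ?top"
    by (simp only: pq)
  then show ?thesis
    by (force simp: cube_interval_def)
qed

lemma box_morphism_lift_covering_edge:
  assumes \<phi>: "box_morphism m n \<phi>" and cover: "cube_interval n a b = {a, b}" "a \<noteq> b"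
    and x: "x \<in> cube m" "\<phi> x = a"
  shows "y \<in> cube m \<Longrightarrow> cube_le x y \<Longrightarrow> \<phi> y = b \<Longrightarrow>
    \<exists>u\<in>cube m. \<exists>v\<in>cube m. cube_le u v \<and> is_interval m {u, v} \<and> \<phi> u = a \<and> \<phi> v = b"
proof (induction "count_list y True" arbitrary: y rule: less_induct)
  case less
  have "x \<noteq> y"
    using x less.prems cover(2) by auto
  with less.prems(2) obtain j where j: "j < m" "\<not> x!j" "y!j"
    using less.prems(1) by (auto simp: cube_def elim: cube_le_neq_ex_nth)
  let ?y' = "y[j := False]"
  have y': "?y' \<in> cube m" "cube_le x ?y'" "cube_le ?y' y"
    using less.prems(1,2) j(2) by (simp_all add: cube_def cube_le_switch_off cube_le_switch_off_right)
  have "is_interval m (cube_interval m ?y' y)"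
    using y' less.prems(1) by (simp add: is_interval_cube_interval)
  then have edge: "is_interval m {?y', y}"
    by (simp add: cube_interval_switch_off[OF less.prems(1) j(1,3)])
  have "\<phi> ?y' \<in> cube_interval n a b"
    using box_morphism_cube[OF \<phi> y'(1)] box_morphism_mono[OF \<phi> x(1) y'(1,2)]
      box_morphism_mono[OF \<phi> y'(1) less.prems(1) y'(3)] x(2) less.prems(3)
    by (simp add: cube_interval_def)
  then consider "\<phi> ?y' = a" | "\<phi> ?y' = b"
    using cover(1) by blast
  then show ?case
  proof cases
    case 1
    then show ?thesis
      using y'(1,3) edge less.prems(1,3) by blast
  next
    case 2
    have "count_list ?y' True < count_list y True"
      using count_list_switch_off j less.prems(1) by (simp add: cube_def)
    then show ?thesis
      using less.hyps y'(1,2) 2 by blast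
  qed
qed

theorem mainTheorem8:
  fixes m n :: nat and \<phi> \<delta> :: "bool list \<Rightarrow> bool list"
  assumes "box_morphism m n \<phi>" and "\<phi> ` cube m = cube n"
    and "box_morphism 1 n \<delta>" and "inj_on \<delta> (cube 1)"
  shows "\<exists>\<delta>'. box_morphism 1 m \<delta>' \<and> (\<forall>x\<in>cube 1. \<phi> (\<delta>' x) = \<delta> x)"
proof -
  define a b where "a = \<delta> [False]" and "b = \<delta> [True]"
  have ab: "a \<in> cube n" "b \<in> cube n" "cube_le a b" "a \<noteq> b"
    using box_morphism_cube[OF assms(3)] box_morphism_mono[OF assms(3), of "[False]" "[True]"] assms(4)
    unfolding a_def b_def cube_one by (simp_all add: cube_le_iff_nth)
  have "is_interval n {a, b}"
    using box_morphism_image_interval[OF assms(3) is_interval_cube_one]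
    unfolding a_def b_def cube_one by simp
  then have "{a, b} = cube_interval n a b"
    by (rule is_interval_eq_cube_interval) (use ab(3) in \<open>auto simp: cube_le_refl\<close>)
  then have cover: "cube_interval n a b = {a, b}" ..
  obtain x w where x: "x \<in> cube m" "\<phi> x = a" and w: "w \<in> cube m" "\<phi> w = b"
    using assms(2) ab(1,2) by (metis imageE)
  then obtain y where "y \<in> cube m" "cube_le x y" "\<phi> y = b"
    using box_morphism_lift_above[OF assms(1) x(1) w(1)] ab(3) by auto
  then obtain u v where uv: "u \<in> cube m" "v \<in> cube m" "cube_le u v" "is_interval m {u, v}"
    "\<phi> u = a" "\<phi> v = b"
    using box_morphism_lift_covering_edge[OF assms(1) cover ab(4) x] by blast
  show ?thesis
    using box_morphism_from_one[OF uv(1-4)] uv(5,6) unfolding a_def b_def cube_one by auto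
qed

end
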